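(* Let $m\ge 1$ and $n_1,\ldots,n_m\ge 2$. Let $I=(i_1,\ldots,i_m)$ and $J=(j_1,\ldots,j_m)$ be multi-indices with $i_k,j_k\in\{1,\ldots,n_k\}$, and let $c\neq 0$ be a complex scalar (with $c$ real when $I=J$, so that $\mathcal{E}^{IJ}(c)$ is Hermitian). If $I=J$, then $\operatorname{hrank}\mathcal{E}^{IJ}(c)=1$. If $I\neq J$, then $\operatorname{hrank}\mathcal{E}^{IJ}(c)=2d$, where $d$ is the number of indices $k\in\{1,\ldots,m\}$ with $i_k\neq j_k$.
   Context: For positive integers $n_1,\ldots,n_m$, $\mathbb{C}^{[n_1,\ldots,n_m]}$ denotes the real vector space of Hermitian tensors, i.e. tensors $\mathcal{H}\in\mathbb{C}^{n_1\times\cdots\times n_m\times n_1\times\cdots\times n_m}$ with $\mathcal{H}_{i_1\ldots i_m j_1\ldots j_m}=\overline{\mathcal{H}_{j_1\ldots j_m i_1\ldots i_m}}$ for all indices. For vectors $v_i\in\mathbb{C}^{n_i}$, $[v_1,\ldots,v_m]_{\otimes h}:=v_1\otimes\cdots\otimes v_m\otimes\overline{v_1}\otimes\cdots\otimes\overline{v_m}$. Every $\mathcal{H}\in\mathbb{C}^{[n_1,\ldots,n_m]}$ can be written as $\mathcal{H}=\sum_{i=1}^r\lambda_i[u_i^1,\ldots,u_i^m]_{\otimes h}$ with $\lambda_i\in\mathbb{R}$, $u_i^j\in\mathbb{C}^{n_j}$ (a Hermitian decomposition); the Hermitian rank $\operatorname{hrank}(\mathcal{H})$ is the smallest such $r$.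 For multi-indices $I,J$ and a scalar $c$, $\mathcal{E}^{IJ}(c)$ is the Hermitian tensor whose $(i_1,\ldots,i_m,j_1,\ldots,j_m)$ entry equals $c$, whose $(j_1,\ldots,j_m,i_1,\ldots,i_m)$ entry equals $\overline{c}$, and all other entries are zero. *)

theory Defs
  imports Complex_Main
begin

text \<open>The order is m; the dimensions are n k (k < m), indices are
0-based, i.e. i_k ranges over {0..<n k}. A multi-index is a function
I :: nat \<Rightarrow> nat with I k < n k for k < m and I k = 0 for k \<ge> m (so that
equality of multi-indices is equality of functions). A tensor in
C^{[n_1,...,n_m]} is a function H :: (nat\<Rightarrow>nat) \<Rightarrow> (nat\<Rightarrow>nat) \<Rightarrow> complex,
H I J being the entry at (i_1..i_m, j_1..j_m); only valid multi-indices matter.\<close>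

definition valid_idx :: "nat \<Rightarrow> (nat \<Rightarrow> nat) \<Rightarrow> (nat \<Rightarrow> nat) \<Rightarrow> bool" where
  "valid_idx m n I \<longleftrightarrow> (\<forall>k<m. I k < n k) \<and> (\<forall>k\<ge>m. I k = 0)"

definition hermitian_tensor :: "nat \<Rightarrow> (nat \<Rightarrow> nat) \<Rightarrow> ((nat \<Rightarrow> nat) \<Rightarrow> (nat \<Rightarrow> nat) \<Rightarrow> complex) \<Rightarrow> bool" where
  "hermitian_tensor m n H \<longleftrightarrow>
     (\<forall>I J. valid_idx m n I \<longrightarrow> valid_idx m n J \<longrightarrow> H I J = cnj (H J I))"

text \<open>The rank-one Hermitian tensor [v_1,...,v_m]_{\<otimes>h}, with v k the vector in C^{n_k}
(only entries v k i with i < n k are used).\<close>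
definition herm_rank_one :: "nat \<Rightarrow> (nat \<Rightarrow> nat \<Rightarrow> complex) \<Rightarrow> (nat \<Rightarrow> nat) \<Rightarrow> (nat \<Rightarrow> nat) \<Rightarrow> complex" where
  "herm_rank_one m v I J = (\<Prod>k<m. v k (I k)) * (\<Prod>k<m. cnj (v k (J k)))"

definition has_herm_decomp :: "nat \<Rightarrow> (nat \<Rightarrow> nat) \<Rightarrow> ((nat \<Rightarrow> nat) \<Rightarrow> (nat \<Rightarrow> nat) \<Rightarrow> complex) \<Rightarrow> nat \<Rightarrow> bool" where
  "has_herm_decomp m n H r \<longleftrightarrow>
     (\<exists>(lam :: nat \<Rightarrow> real) (u :: nat \<Rightarrow> nat \<Rightarrow> nat \<Rightarrow> complex).
        \<forall>I J. valid_idx m n I \<longrightarrow> valid_idx m n J \<longrightarrow>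
          H I J = (\<Sum>i<r. complex_of_real (lam i) * herm_rank_one m (u i) I J))"

definition hrank :: "nat \<Rightarrow> (nat \<Rightarrow> nat) \<Rightarrow> ((nat \<Rightarrow> nat) \<Rightarrow> (nat \<Rightarrow> nat) \<Rightarrow> complex) \<Rightarrow> nat" where
  "hrank m n H = (LEAST r. has_herm_decomp m n H r)"

definition E_tensor :: "(nat \<Rightarrow> nat) \<Rightarrow> (nat \<Rightarrow> nat) \<Rightarrow> complex \<Rightarrow> (nat \<Rightarrow> nat) \<Rightarrow> (nat \<Rightarrow> nat) \<Rightarrow> complex" where
  "E_tensor I J c X Y = (if X = I \<and> Y = J then c else if X = J \<and> Y = I then cnj c else 0)"

end

theory Submission
  imports Defs "HOL-Library.FuncSet" "HOL-Library.Real_Mod"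
begin

text \<open>
  Let \<open>K\<close> be the set of coordinates where \<open>I\<close> and \<open>J\<close> differ and \<open>d = card K\<close>.

  Upper bound: with \<open>\<zeta>\<close> a primitive \<open>2d\<close>-th root of unity, take the \<open>2d\<close> terms
  \<open>(-1)^j [u\<^sub>j]\<^sub>\<otimes>\<^sub>h\<close> whose \<open>k\<close>-th factor is \<open>e\<^bsub>I k\<^esub> + \<zeta>^j \<mu>\<^sub>k e\<^bsub>J k\<^esub>\<close>.
  If \<open>X\<close> and \<open>Y\<close> differ from \<open>I\<close> in \<open>a\<close> and \<open>b\<close> coordinates, the entry at
  \<open>(X, Y)\<close> of the sum carries the factor \<open>\<Sum>\<^sub>j (-1)^j \<zeta>^(j(a-b))\<close>, which vanishes unless
  \<open>a - b = \<plusminus>d\<close>, i.e. unless \<open>{X, Y} = {I, J}\<close>; one scalar \<open>\<mu>\<^sub>k\<close> absorbs \<open>c\<close>.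

  Lower bound: pair tensors with a product \<open>P\<^sub>1 \<otimes> \<dots> \<otimes> P\<^sub>m\<close>, where \<open>P\<^sub>k\<close> is the Hermitian
  matrix \<open>[[\<alpha>\<^sub>k, p\<^sub>k], [cnj p\<^sub>k, 0]]\<close> on the rows and columns \<open>I k, J k\<close>. On a rank-one
  term the pairing factorises into the quadratic forms of these blocks, while on
  \<open>E\<^sup>I\<^sup>J(c)\<close> it is \<open>2 Re (c \<Prod>\<^sub>k p\<^sub>k)\<close>. Two vectors of \<open>\<complex>\<^sup>2\<close> are isotropic for a common
  block with \<open>p \<noteq> 0\<close>, and one vector for a block with any prescribed \<open>p\<close>. Hence any
  \<open>2d - 1\<close> rank-one terms can all be annihilated while keeping \<open>Re (c \<Prod>\<^sub>k p\<^sub>k) \<noteq> 0\<close>,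
  so no decomposition of length \<open>< 2d\<close> exists.
\<close>

section \<open>Multi-indices\<close>

lemma valid_idx_eqI:
  assumes "valid_idx m n X" "valid_idx m n Y" "\<And>k. k < m \<Longrightarrow> X k = Y k"
  shows "X = Y"
proof
  fix k show "X k = Y k"
    using assms by (cases "k < m") (auto simp: valid_idx_def)
qed

lemma bij_betw_PiE_valid_idx:
  "bij_betw (\<lambda>g k. if k < m then g k else 0) (PiE {..<m} (\<lambda>k. {..<n k})) {X. valid_idx m n X}"
proof (rule bij_betw_imageI)
  show "inj_on (\<lambda>g k. if k < m then g k else 0) (PiE {..<m} (\<lambda>k. {..<n k}))"
  proof (rule inj_onI)
    fix g h
    assume g: "g \<in> PiE {..<m} (\<lambda>k. {..<n k})" and h: "h \<in> PiE {..<m} (\<lambda>k. {..<n k})"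
      and eq: "(\<lambda>k. if k < m then g k else 0) = (\<lambda>k. if k < m then h k else 0)"
    show "g = h"
    proof (rule PiE_ext[OF g h])
      fix k assume "k \<in> {..<m}"
      then show "g k = h k"
        using fun_cong[OF eq, of k] by simp
    qed
  qed
  show "(\<lambda>g k. if k < m then g k else 0) ` PiE {..<m} (\<lambda>k. {..<n k}) = {X. valid_idx m n X}"
  proof
    show "(\<lambda>g k. if k < m then g k else 0) ` PiE {..<m} (\<lambda>k. {..<n k}) \<subseteq> {X. valid_idx m n X}"
    proof (rule image_subsetI)
      fix g assume g: "g \<in> PiE {..<m} (\<lambda>k. {..<n k})"
      show "(\<lambda>k. if k < m then g k else 0) \<in> {X. valid_idx m n X}"
        using PiE_mem[OF g] by (simp add: valid_idx_def)
    qed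
    show "{X. valid_idx m n X} \<subseteq> (\<lambda>g k. if k < m then g k else 0) ` PiE {..<m} (\<lambda>k. {..<n k})"
    proof
      fix X assume "X \<in> {X. valid_idx m n X}"
      then have X: "valid_idx m n X"
        by simp
      have "X = (\<lambda>k. if k < m then restrict X {..<m} k else 0)"
      proof
        fix k show "X k = (if k < m then restrict X {..<m} k else 0)"
          using X by (simp add: valid_idx_def)
      qed
      moreover have "restrict X {..<m} \<in> PiE {..<m} (\<lambda>k. {..<n k})"
        using X by (simp add: valid_idx_def)
      ultimately show "X \<in> (\<lambda>g k. if k < m then g k else 0) ` PiE {..<m} (\<lambda>k. {..<n k})"
        by (rule image_eqI)
    qed
  qed
qed

lemma finite_valid_idx: "finite {X. valid_idx m n X}"
  using bij_betw_finite[OF bij_betw_PiE_valid_idx] by (simp add: finite_PiE)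

lemma sum_prod_valid_idx:
  fixes f :: "nat \<Rightarrow> nat \<Rightarrow> 'a::comm_semiring_1"
  shows "(\<Sum>X | valid_idx m n X. \<Prod>k<m. f k (X k)) = (\<Prod>k<m. \<Sum>x<n k. f k x)"
proof -
  have "(\<Sum>X | valid_idx m n X. \<Prod>k<m. f k (X k)) = (\<Sum>g\<in>PiE {..<m} (\<lambda>k. {..<n k}). \<Prod>k<m. f k (g k))"
    by (subst sum.reindex_bij_betw[OF bij_betw_PiE_valid_idx, symmetric])
       (auto intro!: sum.cong prod.cong)
  also have "\<dots> = (\<Prod>k<m. \<Sum>x<n k. f k x)"
    by (rule prod_sum_PiE[symmetric]) auto
  finally show ?thesis .
qed

definition diff_coords :: "nat \<Rightarrow> (nat \<Rightarrow> nat) \<Rightarrow> (nat \<Rightarrow> nat) \<Rightarrow> nat set" where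
  "diff_coords m X Y = {k. k < m \<and> X k \<noteq> Y k}"

lemma finite_diff_coords [simp]: "finite (diff_coords m X Y)"
  by (simp add: diff_coords_def)

lemma diff_coords_eq_empty_iff:
  assumes "valid_idx m n X" "valid_idx m n Y"
  shows "diff_coords m X Y = {} \<longleftrightarrow> X = Y"
  using valid_idx_eqI[OF assms] by (auto simp: diff_coords_def)

lemma diff_coords_subset:
  assumes "\<forall>k<m. X k \<in> {I k, J k}"
  shows "diff_coords m I X \<subseteq> diff_coords m I J"
  using assms by (auto simp: diff_coords_def)

lemma card_diff_coords_between:
  assumes I: "valid_idx m n I" and J: "valid_idx m n J" and X: "valid_idx m n X"
    and between: "\<forall>k<m. X k \<in> {I k, J k}"
  shows "card (diff_coords m I X) \<le> card (diff_coords m I J)"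
    and "card (diff_coords m I X) = 0 \<longleftrightarrow> X = I"
    and "card (diff_coords m I X) = card (diff_coords m I J) \<longleftrightarrow> X = J"
proof -
  show "card (diff_coords m I X) \<le> card (diff_coords m I J)"
    using diff_coords_subset[OF between] by (simp add: card_mono)
  show "card (diff_coords m I X) = 0 \<longleftrightarrow> X = I"
    using diff_coords_eq_empty_iff[OF I X] by auto
  show "card (diff_coords m I X) = card (diff_coords m I J) \<longleftrightarrow> X = J"
  proof
    assume "card (diff_coords m I X) = card (diff_coords m I J)"
    then have eq: "diff_coords m I X = diff_coords m I J"
      using card_subset_eq[OF _ diff_coords_subset[OF between]] by simp
    show "X = J"
    proof (rule valid_idx_eqI[OF X J])
      fix k assume "k < m"
      show "X k = J k"
      proof (cases "I k = J k")
        case True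
        then have "k \<notin> diff_coords m I X"
          using eq by (simp add: diff_coords_def)
        then show ?thesis
          using \<open>k < m\<close> True by (simp add: diff_coords_def)
      next
        case False
        then have "k \<in> diff_coords m I X"
          using eq \<open>k < m\<close> by (simp add: diff_coords_def)
        then show ?thesis
          using between \<open>k < m\<close> by (auto simp: diff_coords_def)
      qed
    qed
  qed simp
qed

section \<open>Sums of roots of unity\<close>

lemma sum_cis_2pi_multiples:
  assumes "N > 0"
  shows "(\<Sum>j<N. cis (2 * pi * real j * of_int s / real N)) = (if int N dvd s then of_nat N else 0)"
proof -
  define z where "z = cis (2 * pi * of_int s / real N)"
  have pow: "z ^ j = cis (2 * pi * real j * of_int s / real N)" for j
    by (simp add: z_def DeMoivre mult_ac)
  have "z ^ N = 1"
    unfolding pow using assms cis_multiple_2pi[of "of_int s"] by (simp add: mult.assoc)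
  have "z = 1 \<longleftrightarrow> int N dvd s"
  proof -
    have "z = 1 \<longleftrightarrow> (\<exists>q::int. 2 * pi * of_int s / real N = of_int q * (2 * pi))"
      by (simp add: z_def cis_eq_1_iff)
    also have "\<dots> \<longleftrightarrow> (\<exists>q::int. s = q * int N)"
    proof -
      have "2 * pi * of_int s / real N = of_int q * (2 * pi)
          \<longleftrightarrow> real_of_int s = real_of_int (q * int N)" for q :: int
        using assms by (simp add: field_simps)
      then show ?thesis by (simp only: of_int_eq_iff)
    qed
    finally show ?thesis by (auto simp: dvd_def mult.commute)
  qed
  then show ?thesis
    using \<open>z ^ N = 1\<close> by (auto simp: sum_gp_strict simp flip: pow)
qed

lemma sum_alternating_cis_powers:
  fixes d a b :: nat
  defines "\<zeta> \<equiv> cis (pi / real d)"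
  assumes "d > 0" "a \<le> d" "b \<le> d"
  shows "(\<Sum>j<2*d. (-1) ^ j * (\<zeta> ^ j) ^ a * cnj ((\<zeta> ^ j) ^ b))
       = (if a = 0 \<and> b = d \<or> a = d \<and> b = 0 then of_nat (2*d) else 0)"
proof -
  define s where "s = int d + int a - int b"
  have "(-1) ^ j * (\<zeta> ^ j) ^ a * cnj ((\<zeta> ^ j) ^ b)
      = cis (2 * pi * real j * of_int s / real (2*d))" for j
  proof -
    have "(-1) ^ j * (\<zeta> ^ j) ^ a * cnj ((\<zeta> ^ j) ^ b)
        = cis (real j * pi + real a * (real j * (pi / real d)) - real b * (real j * (pi / real d)))"
      by (simp add: \<zeta>_def DeMoivre cis_cnj cis_mult flip: cis_pi)
    also have "\<dots> = cis (2 * pi * real j * of_int s / real (2*d))"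
      using \<open>d > 0\<close> by (intro arg_cong[where f = cis]) (simp add: s_def field_simps)
    finally show ?thesis .
  qed
  moreover have "int (2*d) dvd s \<longleftrightarrow> a = 0 \<and> b = d \<or> a = d \<and> b = 0"
  proof
    assume "int (2*d) dvd s"
    moreover have "0 \<le> s" "s \<le> int (2*d)"
      using assms by (auto simp: s_def)
    ultimately have "s = 0 \<or> s = int (2*d)"
      by (metis dvd_imp_le_int order_le_less zdvd_not_zless)
    then show "a = 0 \<and> b = d \<or> a = d \<and> b = 0"
      using assms by (auto simp: s_def)
  qed (auto simp: s_def)
  ultimately show ?thesis
    using sum_cis_2pi_multiples[of "2*d" s] \<open>d > 0\<close> by simp
qed

section \<open>Hermitian decompositions of \<open>E\<^sup>I\<^sup>J(c)\<close>\<close>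

lemma prod_two_point_vectors:
  fixes w :: "nat \<Rightarrow> 'a::comm_semiring_1"
  shows "(\<Prod>k<m. if X k = I k then 1 else if X k = J k then w k else 0)
       = (if \<forall>k<m. X k \<in> {I k, J k} then \<Prod>k\<in>diff_coords m I X. w k else 0)"
proof (cases "\<forall>k<m. X k \<in> {I k, J k}")
  case True
  then have "(\<Prod>k<m. if X k = I k then 1 else if X k = J k then w k else 0)
      = (\<Prod>k<m. if k \<in> diff_coords m I X then w k else 1)"
    by (intro prod.cong) (auto simp: diff_coords_def)
  also have "\<dots> = (\<Prod>k\<in>{..<m} \<inter> diff_coords m I X. w k)"
    by (rule prod.inter_restrict[symmetric]) simp
  also have "{..<m} \<inter> diff_coords m I X = diff_coords m I X"
    by (auto simp: diff_coords_def)
  finally show ?thesis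
    using True by simp
next
  case False
  then show ?thesis
    by (auto intro!: prod_zero)
qed

lemma sum_alternating_two_point_rank_ones:
  fixes m :: nat and I J X Y :: "nat \<Rightarrow> nat" and \<mu> :: "nat \<Rightarrow> complex"
  defines "d \<equiv> card (diff_coords m I J)"
  defines "\<zeta> \<equiv> cis (pi / real d)"
  defines "u \<equiv> \<lambda>j k x. if x = I k then 1 else if x = J k then \<zeta> ^ j * \<mu> k else 0"
  assumes I: "valid_idx m n I" and J: "valid_idx m n J" and "I \<noteq> J"
    and X: "valid_idx m n X" and Y: "valid_idx m n Y"
  shows "(\<Sum>j<2*d. (-1) ^ j * herm_rank_one m (u j) X Y)
       = (if X = I \<and> Y = J \<or> X = J \<and> Y = I
          then of_nat (2*d) * ((\<Prod>k\<in>diff_coords m I X. \<mu> k) * cnj (\<Prod>k\<in>diff_coords m I Y. \<mu> k))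
          else 0)"
proof -
  define M where "M X = (\<Prod>k\<in>diff_coords m I X. \<mu> k)" for X
  define between where "between X \<longleftrightarrow> (\<forall>k<m. X k \<in> {I k, J k})" for X
  have "d > 0"
    using diff_coords_eq_empty_iff[OF I J] \<open>I \<noteq> J\<close> by (simp add: d_def card_gt_0_iff)
  have prod_u: "(\<Prod>k<m. u j k (X k))
      = (if between X then (\<zeta> ^ j) ^ card (diff_coords m I X) * M X else 0)" for j X
    unfolding u_def prod_two_point_vectors by (auto simp: between_def M_def prod.distrib)
  show ?thesis
  proof (cases "between X \<and> between Y")
    case False
    moreover have "between I" "between J"
      by (auto simp: between_def)
    ultimately show ?thesis
      unfolding herm_rank_one_def cnj_prod[symmetric] prod_u by auto
  next
    case True
    define a where "a = card (diff_coords m I X)"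
    define b where "b = card (diff_coords m I Y)"
    have "\<forall>k<m. X k \<in> {I k, J k}" "\<forall>k<m. Y k \<in> {I k, J k}"
      using True by (simp_all add: between_def)
    note X_between = card_diff_coords_between[OF I J X this(1), folded a_def d_def]
      and Y_between = card_diff_coords_between[OF I J Y this(2), folded b_def d_def]
    have ab: "(a = 0 \<and> b = d \<or> a = d \<and> b = 0) \<longleftrightarrow> (X = I \<and> Y = J \<or> X = J \<and> Y = I)"
      using X_between(2,3) Y_between(2,3) by blast
    have "(-1) ^ j * herm_rank_one m (u j) X Y
        = (-1) ^ j * (\<zeta> ^ j) ^ a * cnj ((\<zeta> ^ j) ^ b) * (M X * cnj (M Y))" for j
      using True unfolding herm_rank_one_def cnj_prod[symmetric] prod_u a_def b_def
      by (simp add: mult_ac)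
    then have "(\<Sum>j<2*d. (-1) ^ j * herm_rank_one m (u j) X Y)
        = (\<Sum>j<2*d. (-1) ^ j * (\<zeta> ^ j) ^ a * cnj ((\<zeta> ^ j) ^ b)) * (M X * cnj (M Y))"
      by (simp only: sum_distrib_right)
    also have "\<dots> = (if X = I \<and> Y = J \<or> X = J \<and> Y = I then of_nat (2*d) * (M X * cnj (M Y)) else 0)"
      using sum_alternating_cis_powers[OF \<open>d > 0\<close> X_between(1) Y_between(1)] ab by (simp add: \<zeta>_def)
    finally show ?thesis
      by (simp add: M_def)
  qed
qed

lemma has_herm_decomp_E_tensor:
  assumes "valid_idx m n I" "valid_idx m n J" "I \<noteq> J"
  shows "has_herm_decomp m n (E_tensor I J c) (2 * card (diff_coords m I J))"
proof -
  define d where "d = card (diff_coords m I J)"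
  obtain k0 where k0: "k0 \<in> diff_coords m I J"
    using diff_coords_eq_empty_iff[OF assms(1,2)] assms(3) by auto
  then have "d > 0"
    by (auto simp: d_def card_gt_0_iff)
  define \<mu> where "\<mu> k = (if k = k0 then cnj c / of_nat (2*d) else 1)" for k
  define u where
    "u = (\<lambda>j k x. if x = I k then 1 else if x = J k then cis (pi / real d) ^ j * \<mu> k else 0)"
  have prod_\<mu>: "(\<Prod>k\<in>diff_coords m I I. \<mu> k) = 1"
    "(\<Prod>k\<in>diff_coords m I J. \<mu> k) = cnj c / of_nat (2*d)"
    using k0 by (simp_all add: \<mu>_def diff_coords_def)
  have "E_tensor I J c X Y = (\<Sum>j<2*d. of_real ((-1) ^ j) * herm_rank_one m (u j) X Y)"
    if "valid_idx m n X" "valid_idx m n Y" for X Y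
  proof -
    have "(\<Sum>j<2*d. of_real ((-1) ^ j) * herm_rank_one m (u j) X Y)
        = (if X = I \<and> Y = J \<or> X = J \<and> Y = I
           then of_nat (2*d) * ((\<Prod>k\<in>diff_coords m I X. \<mu> k) * cnj (\<Prod>k\<in>diff_coords m I Y. \<mu> k))
           else 0)"
      using sum_alternating_two_point_rank_ones[OF assms that, of \<mu>, folded d_def]
      by (simp add: u_def)
    also have "\<dots> = E_tensor I J c X Y"
      using prod_\<mu> \<open>d > 0\<close> assms(3) by (auto simp: E_tensor_def)
    finally show ?thesis ..
  qed
  then show ?thesis
    unfolding has_herm_decomp_def d_def[symmetric] by blast
qed

lemma has_herm_decomp_E_tensor_diag:
  assumes "valid_idx m n I" "c \<in> \<real>"
  shows "has_herm_decomp m n (E_tensor I I c) 1"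
proof -
  have ind: "(\<Prod>k<m. of_bool (X k = I k)) = (of_bool (X = I) :: complex)"
    if X: "valid_idx m n X" for X
  proof (cases "X = I")
    case False
    then obtain k where "k < m" "X k \<noteq> I k"
      using valid_idx_eqI[OF X assms(1)] by blast
    then show ?thesis
      using False by (auto intro!: prod_zero)
  qed simp
  have "E_tensor I I c X Y = of_real (Re c) * herm_rank_one m (\<lambda>k x. of_bool (x = I k)) X Y"
    if X: "valid_idx m n X" and Y: "valid_idx m n Y" for X Y
  proof -
    have "herm_rank_one m (\<lambda>k x. of_bool (x = I k)) X Y = of_bool (X = I) * cnj (of_bool (Y = I))"
      by (simp only: herm_rank_one_def cnj_prod[symmetric] ind[OF X] ind[OF Y])
    then show ?thesis
      using assms(2) by (auto simp: E_tensor_def of_real_Re)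
  qed
  then show ?thesis
    unfolding has_herm_decomp_def
    by (intro exI[of _ "\<lambda>_. Re c"] exI[of _ "\<lambda>_ k x. of_bool (x = I k)"]) simp
qed

section \<open>Pairing with products of Hermitian blocks\<close>

lemma sum_sum_delta:
  assumes "finite A" "finite B" "a \<in> A" "b \<in> B"
  shows "(\<Sum>x\<in>A. \<Sum>y\<in>B. if x = a \<and> y = b then v else 0) = v"
proof -
  have "(\<Sum>y\<in>B. if x = a \<and> y = b then v else 0) = (if x = a then v else 0)" for x
    using assms by (cases "x = a") simp_all
  then show ?thesis
    using assms by simp
qed

definition tensor_pairing ::
  "nat \<Rightarrow> (nat \<Rightarrow> nat) \<Rightarrow> ((nat \<Rightarrow> nat) \<Rightarrow> (nat \<Rightarrow> nat) \<Rightarrow> complex)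
    \<Rightarrow> ((nat \<Rightarrow> nat) \<Rightarrow> (nat \<Rightarrow> nat) \<Rightarrow> complex) \<Rightarrow> complex" where
  "tensor_pairing m n H T = (\<Sum>X | valid_idx m n X. \<Sum>Y | valid_idx m n Y. H X Y * T X Y)"

lemma tensor_pairing_herm_decomp:
  assumes "\<And>X Y. valid_idx m n X \<Longrightarrow> valid_idx m n Y \<Longrightarrow>
             H X Y = (\<Sum>i<r. of_real (lam i) * herm_rank_one m (u i) X Y)"
  shows "tensor_pairing m n H T
       = (\<Sum>i<r. of_real (lam i) * tensor_pairing m n (herm_rank_one m (u i)) T)"
  unfolding tensor_pairing_def using assms
  by (simp add: sum_distrib_left sum_distrib_right mult.assoc sum.swap[of _ "{..<r}"])

lemma tensor_pairing_herm_rank_one_prod: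
  "tensor_pairing m n (herm_rank_one m v) (\<lambda>X Y. \<Prod>k<m. P k (X k) (Y k))
     = (\<Prod>k<m. \<Sum>x<n k. \<Sum>y<n k. v k x * cnj (v k y) * P k x y)"
proof -
  have "herm_rank_one m v X Y * (\<Prod>k<m. P k (X k) (Y k))
      = (\<Prod>k<m. v k (X k) * cnj (v k (Y k)) * P k (X k) (Y k))" for X Y
    by (simp add: herm_rank_one_def prod.distrib)
  moreover have "(\<Sum>Y | valid_idx m n Y. \<Prod>k<m. v k (X k) * cnj (v k (Y k)) * P k (X k) (Y k))
      = (\<Prod>k<m. \<Sum>y<n k. v k (X k) * cnj (v k y) * P k (X k) y)" for X
    by (rule sum_prod_valid_idx)
  moreover have "(\<Sum>X | valid_idx m n X. \<Prod>k<m. \<Sum>y<n k. v k (X k) * cnj (v k y) * P k (X k) y)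
      = (\<Prod>k<m. \<Sum>x<n k. \<Sum>y<n k. v k x * cnj (v k y) * P k x y)"
    by (rule sum_prod_valid_idx)
  ultimately show ?thesis
    by (simp add: tensor_pairing_def)
qed

lemma tensor_pairing_E_tensor:
  assumes "valid_idx m n I" "valid_idx m n J" "I \<noteq> J"
  shows "tensor_pairing m n (E_tensor I J c) T = c * T I J + cnj c * T J I"
proof -
  have "E_tensor I J c X Y * T X Y
      = (if X = I \<and> Y = J then c * T I J else 0) + (if X = J \<and> Y = I then cnj c * T J I else 0)"
    for X Y
    using assms(3) by (auto simp: E_tensor_def)
  then show ?thesis
    using assms by (simp add: tensor_pairing_def sum.distrib sum_sum_delta finite_valid_idx)
qed

definition herm_block :: "real \<Rightarrow> complex \<Rightarrow> nat \<Rightarrow> nat \<Rightarrow> nat \<Rightarrow> nat \<Rightarrow> complex" where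
  "herm_block \<alpha> p a b x y =
     (if x = a \<and> y = a then of_real \<alpha> else if x = a \<and> y = b then p
      else if x = b \<and> y = a then cnj p else 0)"

definition herm_block_form :: "real \<Rightarrow> complex \<Rightarrow> complex \<Rightarrow> complex \<Rightarrow> real" where
  "herm_block_form \<alpha> p a b = \<alpha> * (cmod a)\<^sup>2 + 2 * Re (p * a * cnj b)"

lemma sum_herm_block_eq_form:
  assumes "a \<noteq> b" "a < N" "b < N"
  shows "(\<Sum>x<N. \<Sum>y<N. v x * cnj (v y) * herm_block \<alpha> p a b x y)
       = of_real (herm_block_form \<alpha> p (v a) (v b))"
proof -
  have "v x * cnj (v y) * herm_block \<alpha> p a b x y
      = (if x = a \<and> y = a then v a * cnj (v a) * of_real \<alpha> else 0)
      + (if x = a \<and> y = b then p * v a * cnj (v b) else 0)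
      + (if x = b \<and> y = a then cnj (p * v a * cnj (v b)) else 0)" for x y
    using assms(1) by (auto simp: herm_block_def)
  then have "(\<Sum>x<N. \<Sum>y<N. v x * cnj (v y) * herm_block \<alpha> p a b x y)
      = v a * cnj (v a) * of_real \<alpha> + (p * v a * cnj (v b) + cnj (p * v a * cnj (v b)))"
    using assms by (simp only: sum.distrib sum_sum_delta finite_lessThan lessThan_iff add.assoc)
  also have "\<dots> = of_real (herm_block_form \<alpha> p (v a) (v b))"
    unfolding complex_add_cnj herm_block_form_def by (simp flip: complex_norm_square)
  finally show ?thesis .
qed

lemma ex_herm_block_form_eq_0: "\<exists>\<alpha>. herm_block_form \<alpha> p a b = 0"
proof (cases "a = 0")
  case False
  then show ?thesis
    by (intro exI[of _ "- 2 * Re (p * a * cnj b) / (cmod a)\<^sup>2"]) (simp add: herm_block_form_def)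
qed (simp add: herm_block_form_def)

lemma ex_herm_block_form_eq_0_pair:
  "\<exists>\<alpha> p. p \<noteq> 0 \<and> herm_block_form \<alpha> p a b = 0 \<and> herm_block_form \<alpha> p a' b' = 0"
proof (cases "a = 0")
  case True
  obtain \<alpha> where "herm_block_form \<alpha> 1 a' b' = 0"
    using ex_herm_block_form_eq_0 by blast
  with True show ?thesis
    by (intro exI[of _ \<alpha>] exI[of _ 1]) (simp add: herm_block_form_def)
next
  case False
  define t where "t = (cmod a')\<^sup>2 / (cmod a)\<^sup>2"
  define \<delta> where "\<delta> = a' * cnj b' - of_real t * (a * cnj b)"
  \<comment> \<open>\<open>Re (p * \<delta>) = 0\<close> makes the two linear conditions on \<open>\<alpha>\<close> proportional.\<close>
  define p where "p = (if \<delta> = 0 then 1 else \<i> * cnj \<delta>)"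
  define \<alpha> where "\<alpha> = - 2 * Re (p * a * cnj b) / (cmod a)\<^sup>2"
  have "Re (p * \<delta>) = 0"
    by (simp add: p_def)
  then have "Re (p * a' * cnj b') = t * Re (p * a * cnj b)"
    by (simp add: \<delta>_def algebra_simps)
  then have "herm_block_form \<alpha> p a' b' = 0"
    using False by (simp add: herm_block_form_def \<alpha>_def t_def field_simps)
  moreover have "herm_block_form \<alpha> p a b = 0"
    using False by (simp add: herm_block_form_def \<alpha>_def)
  moreover have "p \<noteq> 0"
    by (simp add: p_def)
  ultimately show ?thesis
    by blast
qed

lemma ex_card_Diff_two_less:
  assumes "finite T" "card T < n + 2" "n \<ge> 2"
  shows "\<exists>i1 i2. card (T - {i1, i2}) < n"
proof (cases "card T < n")
  case True
  then show ?thesis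
    using card_Diff1_le[of T undefined] by (intro exI[of _ undefined]) simp
next
  case False
  with assms(3) have "card T \<ge> 2"
    by linarith
  then obtain i1 where "i1 \<in> T"
    by fastforce
  then have "card (T - {i1}) \<ge> 1"
    using \<open>card T \<ge> 2\<close> by (simp add: card_Diff_singleton)
  then have "T - {i1} \<noteq> {}"
    by (metis card.empty not_one_le_zero)
  then obtain i2 where "i2 \<in> T - {i1}"
    by blast
  then have "card (T - {i1, i2}) = card T - 2"
    using \<open>i1 \<in> T\<close> \<open>finite T\<close> by (auto simp: card_Diff_subset card_insert_if)
  then have "card (T - {i1, i2}) < n"
    using assms(2) \<open>card T \<ge> 2\<close> by simp
  then show ?thesis
    by blast
qed

text \<open>
  Each coordinate of \<open>K\<close> annihilates two of the vectors indexed by \<open>T\<close>, except one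
  coordinate, which annihilates a single vector but whose \<open>p\<close> can be chosen freely to
  make \<open>Re (c * \<Prod>p)\<close> nonzero.
\<close>

lemma ex_annihilating_herm_blocks:
  fixes a b :: "'i \<Rightarrow> 'k \<Rightarrow> complex"
  assumes "finite K" "finite T" "card T < 2 * card K" "c \<noteq> 0"
  shows "\<exists>\<alpha> p. (\<forall>i\<in>T. \<exists>k\<in>K. herm_block_form (\<alpha> k) (p k) (a i k) (b i k) = 0)
               \<and> Re (c * (\<Prod>k\<in>K. p k)) \<noteq> 0"
proof -
  have "K \<noteq> {}"
    using assms(3) by auto
  with assms(1) show ?thesis
    using assms(2-4)
  proof (induction K arbitrary: T c rule: finite_ne_induct)
    case (singleton k)
    have "card T \<le> Suc 0"
      using singleton.prems by simp
    then obtain i where "T \<subseteq> {i}"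
      using card_le_Suc0_iff_eq[OF \<open>finite T\<close>] by blast
    obtain \<alpha> where "herm_block_form \<alpha> (cnj c) (a i k) (b i k) = 0"
      using ex_herm_block_form_eq_0 by blast
    moreover have "Re (c * cnj c) \<noteq> 0"
      using singleton.prems by (simp flip: complex_norm_square)
    ultimately show ?case
      using \<open>T \<subseteq> {i}\<close> by (intro exI[of _ "\<lambda>_. \<alpha>"] exI[of _ "\<lambda>_. cnj c"]) auto
  next
    case (insert k K)
    have "card T < 2 * card K + 2" "2 * card K \<ge> 2"
      using insert.prems insert.hyps by (simp_all add: Suc_le_eq card_gt_0_iff)
    then obtain i1 i2 where small: "card (T - {i1, i2}) < 2 * card K"
      using ex_card_Diff_two_less[OF \<open>finite T\<close>] by blast
    obtain \<alpha>0 p0 where p0: "p0 \<noteq> 0"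
      "herm_block_form \<alpha>0 p0 (a i1 k) (b i1 k) = 0" "herm_block_form \<alpha>0 p0 (a i2 k) (b i2 k) = 0"
      using ex_herm_block_form_eq_0_pair by blast
    have "c * p0 \<noteq> 0"
      using insert.prems p0 by simp
    then obtain \<alpha> p where
      ann: "\<forall>i\<in>T - {i1, i2}. \<exists>k'\<in>K. herm_block_form (\<alpha> k') (p k') (a i k') (b i k') = 0" and
      nz: "Re (c * p0 * (\<Prod>k'\<in>K. p k')) \<noteq> 0"
      using insert.IH[OF finite_Diff[OF \<open>finite T\<close>] small] by blast
    have "\<forall>i\<in>T. \<exists>k'\<in>insert k K.
        herm_block_form ((\<alpha>(k := \<alpha>0)) k') ((p(k := p0)) k') (a i k') (b i k') = 0"
      using ann p0 insert.hyps(3)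
      by (metis DiffI fun_upd_other fun_upd_same insertE insertI1 insertI2 singletonD)
    moreover have "(\<Prod>k'\<in>K. (p(k := p0)) k') = (\<Prod>k'\<in>K. p k')"
      using insert.hyps by (intro prod.cong) auto
    then have "(\<Prod>k'\<in>insert k K. (p(k := p0)) k') = p0 * (\<Prod>k'\<in>K. p k')"
      using insert.hyps by simp
    ultimately show ?case
      using nz by (intro exI[of _ "\<alpha>(k := \<alpha>0)"] exI[of _ "p(k := p0)"]) (simp add: mult.assoc)
  qed
qed

lemma tensor_pairing_herm_rank_one_herm_blocks_eq_0:
  assumes "k < m" "I k \<noteq> J k" "I k < n k" "J k < n k"
    and "herm_block_form (\<alpha> k) (p k) (v k (I k)) (v k (J k)) = 0"
  shows "tensor_pairing m n (herm_rank_one m v)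
           (\<lambda>X Y. \<Prod>k<m. herm_block (\<alpha> k) (p k) (I k) (J k) (X k) (Y k)) = 0"
proof -
  have "(\<Sum>x<n k. \<Sum>y<n k. v k x * cnj (v k y) * herm_block (\<alpha> k) (p k) (I k) (J k) x y) = 0"
    using assms by (simp add: sum_herm_block_eq_form)
  then show ?thesis
    unfolding tensor_pairing_herm_rank_one_prod[where P = "\<lambda>k. herm_block (\<alpha> k) (p k) (I k) (J k)"]
    using \<open>k < m\<close> by (intro prod_zero) auto
qed

lemma tensor_pairing_E_tensor_herm_blocks:
  assumes "valid_idx m n I" "valid_idx m n J" "I \<noteq> J"
    and "\<And>k. k < m \<Longrightarrow> I k = J k \<Longrightarrow> \<alpha> k = 1"
  shows "tensor_pairing m n (E_tensor I J c)
           (\<lambda>X Y. \<Prod>k<m. herm_block (\<alpha> k) (p k) (I k) (J k) (X k) (Y k))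
       = of_real (2 * Re (c * (\<Prod>k\<in>diff_coords m I J. p k)))"
proof -
  have "herm_block (\<alpha> k) (p k) (I k) (J k) (I k) (J k) = (if k \<in> diff_coords m I J then p k else 1)"
    and "herm_block (\<alpha> k) (p k) (I k) (J k) (J k) (I k)
         = (if k \<in> diff_coords m I J then cnj (p k) else 1)"
    if "k < m" for k
    using that assms(4) by (auto simp: herm_block_def diff_coords_def)
  moreover have "diff_coords m I J \<subseteq> {..<m}"
    by (auto simp: diff_coords_def)
  ultimately have "(\<Prod>k<m. herm_block (\<alpha> k) (p k) (I k) (J k) (I k) (J k))
      = (\<Prod>k\<in>diff_coords m I J. p k)"
    and "(\<Prod>k<m. herm_block (\<alpha> k) (p k) (I k) (J k) (J k) (I k))
      = cnj (\<Prod>k\<in>diff_coords m I J. p k)"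
    by (simp_all add: prod.inter_restrict[symmetric] Int_absorb1)
  then show ?thesis
    using complex_add_cnj[of "c * (\<Prod>k\<in>diff_coords m I J. p k)"]
    by (simp add: tensor_pairing_E_tensor[OF assms(1-3)])
qed

lemma herm_decomp_E_tensor_length_ge:
  assumes "valid_idx m n I" "valid_idx m n J" "c \<noteq> 0"
    and "has_herm_decomp m n (E_tensor I J c) r"
  shows "2 * card (diff_coords m I J) \<le> r"
proof (rule ccontr)
  define K where "K = diff_coords m I J"
  assume "\<not> 2 * card (diff_coords m I J) \<le> r"
  then have r: "card {..<r} < 2 * card K"
    by (simp add: K_def)
  then have "I \<noteq> J"
    by (auto simp: K_def diff_coords_def)
  obtain lam u where dec: "\<And>X Y. valid_idx m n X \<Longrightarrow> valid_idx m n Y \<Longrightarrow>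
      E_tensor I J c X Y = (\<Sum>i<r. of_real (lam i) * herm_rank_one m (u i) X Y)"
    using assms(4) unfolding has_herm_decomp_def by blast
  obtain \<alpha> p where
    ann: "\<forall>i<r. \<exists>k\<in>K. herm_block_form (\<alpha> k) (p k) (u i k (I k)) (u i k (J k)) = 0" and
    nz: "Re (c * (\<Prod>k\<in>K. p k)) \<noteq> 0"
    using ex_annihilating_herm_blocks[of K "{..<r}" c "\<lambda>i k. u i k (I k)" "\<lambda>i k. u i k (J k)"]
      r assms(3)
    by (auto simp: K_def)
  define \<alpha>' where "\<alpha>' k = (if k \<in> K then \<alpha> k else 1)" for k
  define T where "T X Y = (\<Prod>k<m. herm_block (\<alpha>' k) (p k) (I k) (J k) (X k) (Y k))" for X Y
  have "tensor_pairing m n (herm_rank_one m (u i)) T = 0" if "i < r" for i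
  proof -
    obtain k where "k \<in> K" "herm_block_form (\<alpha> k) (p k) (u i k (I k)) (u i k (J k)) = 0"
      using ann \<open>i < r\<close> by blast
    then show ?thesis
      unfolding T_def using assms(1,2)
      by (intro tensor_pairing_herm_rank_one_herm_blocks_eq_0)
         (auto simp: \<alpha>'_def K_def diff_coords_def valid_idx_def)
  qed
  then have "tensor_pairing m n (E_tensor I J c) T = 0"
    by (simp add: tensor_pairing_herm_decomp[OF dec])
  moreover have "tensor_pairing m n (E_tensor I J c) T = of_real (2 * Re (c * (\<Prod>k\<in>K. p k)))"
    unfolding T_def K_def
    by (rule tensor_pairing_E_tensor_herm_blocks[OF assms(1,2) \<open>I \<noteq> J\<close>])
       (simp add: \<alpha>'_def K_def diff_coords_def)
  ultimately have "Re (c * (\<Prod>k\<in>K. p k)) = 0"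
    by (simp only: of_real_eq_0_iff mult_eq_0_iff) simp
  with nz show False
    by contradiction
qed

lemma hrank_eqI:
  assumes "has_herm_decomp m n H r" "\<And>s. has_herm_decomp m n H s \<Longrightarrow> r \<le> s"
  shows "hrank m n H = r"
  unfolding hrank_def using assms by (rule Least_equality)

theorem theorem2p3:
  fixes m :: nat and n :: "nat \<Rightarrow> nat" and I J :: "nat \<Rightarrow> nat" and c :: complex
  assumes "m \<ge> 1"
    and "\<forall>k<m. n k \<ge> 2"
    and "valid_idx m n I" and "valid_idx m n J"
    and "c \<noteq> 0"
    and "I = J \<longrightarrow> c \<in> \<real>"
  shows "(I = J \<longrightarrow> hrank m n (E_tensor I J c) = 1)
       \<and> (I \<noteq> J \<longrightarrow> hrank m n (E_tensor I J c) = 2 * card {k. k < m \<and> I k \<noteq> J k})"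
proof (intro conjI impI)
  assume "I = J"
  show "hrank m n (E_tensor I J c) = 1"
  proof (rule hrank_eqI)
    show "has_herm_decomp m n (E_tensor I J c) 1"
      using has_herm_decomp_E_tensor_diag assms(3,6) \<open>I = J\<close> by simp
  next
    fix s assume "has_herm_decomp m n (E_tensor I J c) s"
    then obtain lam u
      where "E_tensor I J c I I = (\<Sum>i<s. of_real (lam i) * herm_rank_one m (u i) I I)"
      using assms(3) unfolding has_herm_decomp_def by blast
    then show "1 \<le> s"
      using \<open>c \<noteq> 0\<close> \<open>I = J\<close> by (cases s) (auto simp: E_tensor_def)
  qed
next
  assume "I \<noteq> J"
  then show "hrank m n (E_tensor I J c) = 2 * card {k. k < m \<and> I k \<noteq> J k}"
    using has_herm_decomp_E_tensor[OF assms(3,4)] herm_decomp_E_tensor_length_ge[OF assms(3-5)]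
    unfolding diff_coords_def by (intro hrank_eqI)
qed

end
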